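(* Let $s>0$ and $0<\epsilon<\min\{2s,1\}$. Then there exist $\sigma\in(0,1)$ and $C>0$ such that for all $u_1,u_2,u_3\in H^s(\mathbb{R})$, $\|T_\sigma(u_1,u_2,u_3)\|_{H^{s+\epsilon}}\le C\prod_{j=1}^3\|u_j\|_{H^s}$.
   Context: (Setting of the cubic NLS.) $\langle a\rangle=(1+|a|^2)^{1/2}$; $\Xi=(\xi,\xi_1,\xi_2,\xi_3)$, $\Phi(\Xi)=(\xi-\xi_1)(\xi-\xi_3)$, $m(\Xi)=1$, and $\mathcal{F}[T_\sigma(u_1,u_2,u_3)](\xi)=\int_{\xi_1+\xi_2+\xi_3=\xi}\langle\Phi(\Xi)\rangle^{-\sigma}\hat u_1(\xi_1)\hat u_2(\xi_2)\hat u_3(\xi_3)\,d\xi_1d\xi_3$. *)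

theory Defs
  imports "HOL-Analysis.Analysis"
begin

definition jbr :: "real \<Rightarrow> real" where
  "jbr a = sqrt (1 + a\<^sup>2)"

definition Phi :: "real \<Rightarrow> real \<Rightarrow> real \<Rightarrow> real \<Rightarrow> real" where
  "Phi \<xi> \<xi>1 \<xi>2 \<xi>3 = (\<xi> - \<xi>1) * (\<xi> - \<xi>3)"

text \<open>Sobolev spaces on the Fourier side: a function u is in H^s iff its Fourier
  transform f = hat u is measurable with  int <xi>^(2s) |f(xi)|^2 dxi < infinity;
  the H^s norm is  (int <xi>^(2s) |f(xi)|^2 dxi)^(1/2).\<close>
definition Hs_space :: "real \<Rightarrow> (real \<Rightarrow> complex) \<Rightarrow> bool" where
  "Hs_space s f \<longleftrightarrow> f \<in> borel_measurable lborel \<and>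
     integrable lborel (\<lambda>\<xi>. jbr \<xi> powr (2 * s) * (cmod (f \<xi>))\<^sup>2)"

definition Hs_norm :: "real \<Rightarrow> (real \<Rightarrow> complex) \<Rightarrow> real" where
  "Hs_norm s f = sqrt (\<integral>\<xi>. jbr \<xi> powr (2 * s) * (cmod (f \<xi>))\<^sup>2 \<partial>lborel)"

text \<open>Integrand of F[T_sigma(u1,u2,u3)](xi) in the variables (xi1, xi3), with xi2 = xi - xi1 - xi3.\<close>
definition T_integrand ::
  "real \<Rightarrow> (real \<Rightarrow> complex) \<Rightarrow> (real \<Rightarrow> complex) \<Rightarrow> (real \<Rightarrow> complex) \<Rightarrow> real \<Rightarrow> real \<times> real \<Rightarrow> complex" where
  "T_integrand \<sigma> f1 f2 f3 \<xi> = (\<lambda>(\<xi>1, \<xi>3).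
      complex_of_real (jbr (Phi \<xi> \<xi>1 (\<xi> - \<xi>1 - \<xi>3) \<xi>3) powr (- \<sigma>))
      * f1 \<xi>1 * f2 (\<xi> - \<xi>1 - \<xi>3) * f3 \<xi>3)"

text \<open>Fourier transform of T_sigma(u1,u2,u3), given f_j = hat u_j.\<close>
definition T_hat ::
  "real \<Rightarrow> (real \<Rightarrow> complex) \<Rightarrow> (real \<Rightarrow> complex) \<Rightarrow> (real \<Rightarrow> complex) \<Rightarrow> real \<Rightarrow> complex" where
  "T_hat \<sigma> f1 f2 f3 \<xi> = (\<integral>p. T_integrand \<sigma> f1 f2 f3 \<xi> p \<partial>(lborel :: (real \<times> real) measure))"

end

(* Put G_j = <xi_j>^s |f_j|. Since xi - xi1 = xi2 + xi3 and xi - xi3 = xi1 + xi2, for eps <= 2s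
   <xi>^(s+eps) <~ (<xi - xi1>^eps + <xi - xi3>^eps) <xi1>^s <xi2>^s <xi3>^s,
   so <xi>^(s+eps) |F T_sigma(xi)| is dominated by integrating G_1(xi1) G_2(xi2) G_3(xi3)
   against a kernel K(xi, xi1, xi3) <~ <Phi>^(-sigma) (<xi - xi1>^eps + <xi - xi3>^eps).
   With 1 + eps < 2 sigma < 2, the integral of <t (t - d)>^(-sigma) <t>^eps dt is bounded
   uniformly in d (split at |t - d| = |t|/2), so K has uniformly bounded integrals in xi and
   in xi1 (for fixed xi2).  Cauchy-Schwarz in (xi1, xi3) and Fubini (a Schur test) then bound
   its L^2 norm in xi by a constant times the product of the L^2 norms of the G_j. *)

theory Submission
  imports Defs
begin

lemma jbr_ge_1: "1 \<le> jbr t"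
  unfolding jbr_def by simp

lemma jbr_pos: "0 < jbr t"
  using jbr_ge_1[of t] by linarith

lemma abs_le_jbr: "\<bar>t\<bar> \<le> jbr t"
  unfolding jbr_def by (rule real_le_rsqrt) simp

lemma jbr_minus: "jbr (- t) = jbr t"
  unfolding jbr_def by simp

lemma jbr_triangle: "jbr (u + v) \<le> jbr u + jbr v"
proof -
  have "jbr (u + v) = norm ((1::real, u) + (0, v))"
    unfolding jbr_def by (simp add: norm_Pair)
  also have "\<dots> \<le> norm (1::real, u) + norm (0::real, v)"
    by (rule norm_triangle_ineq)
  also have "\<dots> \<le> jbr u + jbr v"
    using abs_le_jbr[of v] unfolding jbr_def by (simp add: norm_Pair)
  finally show ?thesis .
qed

lemma jbr_measurable [measurable]: "jbr \<in> borel_measurable borel"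
  unfolding jbr_def[abs_def] by measurable

lemma jbr_powr_squared: "(jbr t powr a)\<^sup>2 = jbr t powr (2 * a)"
  using jbr_pos[of t] by (simp add: powr_power)

lemma power2_powr: "0 < (x::real) \<Longrightarrow> (x\<^sup>2) powr a = x powr (2 * a)"
  by (simp add: powr_powr flip: powr_numeral)

lemma add_le_two_mult:
  fixes p q :: real
  assumes "1 \<le> p" "1 \<le> q"
  shows "p + q \<le> 2 * p * q"
proof -
  have "0 \<le> (p - 1) * (q - 1)" using assms by simp
  moreover have "1 \<le> p * q" using assms mult_mono[of 1 p 1 q] by simp
  ultimately show ?thesis by (simp add: algebra_simps)
qed

subsection \<open>The frequency weight inequality\<close>

lemma interpolated_weight_bound:
  fixes X P Q R m s \<epsilon> :: real
  assumes "0 < X" "1 \<le> P" "1 \<le> Q" "1 \<le> R" "1 \<le> m"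
    and "X \<le> 3 * P" "X\<^sup>2 \<le> 6 * m\<^sup>2 * Q * R"
    and "0 \<le> s" "0 \<le> \<epsilon>" "\<epsilon> \<le> 2 * s"
  shows "X powr (s + \<epsilon>) \<le> 3 powr s * 6 powr (\<epsilon> / 2) * m powr \<epsilon> * (P powr s * Q powr s * R powr s)"
proof -
  have "X powr (s + \<epsilon>) = X powr s * (X\<^sup>2) powr (\<epsilon> / 2)"
    using assms by (simp add: powr_add power2_powr)
  also have "\<dots> \<le> (3 * P) powr s * (6 * m\<^sup>2 * Q * R) powr (\<epsilon> / 2)"
    using assms by (intro mult_mono powr_mono2) auto
  also have "\<dots> = (3 powr s * 6 powr (\<epsilon> / 2) * m powr \<epsilon>) * (P powr s * (Q powr (\<epsilon> / 2) * R powr (\<epsilon> / 2)))"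
    using assms by (simp add: powr_mult power2_powr mult_ac)
  also have "\<dots> \<le> (3 powr s * 6 powr (\<epsilon> / 2) * m powr \<epsilon>) * (P powr s * (Q powr s * R powr s))"
    using assms by (intro mult_left_mono mult_mono powr_mono) auto
  finally show ?thesis by (simp add: mult_ac)
qed

lemma jbr_sum3_linear_bounds:
  assumes yz: "jbr (y + z) \<le> m" and xy: "jbr (x + y) \<le> m"
  shows "jbr (x + y + z) \<le> 2 * jbr x * m"
    and "jbr (x + y + z) \<le> 2 * jbr z * m"
    and "jbr (x + y + z) \<le> 3 * m * jbr y"
proof -
  have m1: "1 \<le> m" using jbr_ge_1 yz order_trans by blast
  note g = jbr_ge_1[of x] jbr_ge_1[of y] jbr_ge_1[of z]
  have "jbr (x + y + z) \<le> jbr x + jbr (y + z)"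
    using jbr_triangle[of x "y + z"] by (simp add: add.assoc)
  also have "\<dots> \<le> 2 * jbr x * jbr (y + z)" using g jbr_ge_1 by (intro add_le_two_mult)
  finally show "jbr (x + y + z) \<le> 2 * jbr x * m" using yz g by (smt (verit) mult_left_mono)
  have "jbr (x + y + z) \<le> jbr z + jbr (x + y)"
    using jbr_triangle[of z "x + y"] by (simp add: ac_simps)
  also have "\<dots> \<le> 2 * jbr z * jbr (x + y)" using g jbr_ge_1 by (intro add_le_two_mult)
  finally show "jbr (x + y + z) \<le> 2 * jbr z * m" using xy g by (smt (verit) mult_left_mono)
  have "jbr (x + y + z) \<le> jbr (y + z) + (jbr (x + y) + jbr (- y))"
    using jbr_triangle[of "y + z" "(x + y) + (- y)"] jbr_triangle[of "x + y" "- y"]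
    by (simp add: ac_simps)
  also have "\<dots> \<le> 2 * m + jbr y" using yz xy by (simp add: jbr_minus)
  also have "\<dots> \<le> 3 * m * jbr y"
  proof -
    have "m \<le> m * jbr y" "jbr y \<le> m * jbr y"
      using m1 g by (simp_all add: mult_le_cancel_left1 mult_le_cancel_right1)
    then show ?thesis by linarith
  qed
  finally show "jbr (x + y + z) \<le> 3 * m * jbr y" .
qed

lemma jbr_sum3_squared_bounds:
  assumes "jbr (y + z) \<le> m" and "jbr (x + y) \<le> m"
  shows "(jbr (x + y + z))\<^sup>2 \<le> 6 * m\<^sup>2 * jbr y * jbr z"
    and "(jbr (x + y + z))\<^sup>2 \<le> 6 * m\<^sup>2 * jbr x * jbr z"
    and "(jbr (x + y + z))\<^sup>2 \<le> 6 * m\<^sup>2 * jbr x * jbr y"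
proof -
  note e = jbr_sum3_linear_bounds[OF assms]
  have sq: "A\<^sup>2 \<le> B * C" if "0 \<le> A" "A \<le> B" "A \<le> C" for A B C :: real
    using that mult_mono[of A B A C] by (simp add: power2_eq_square)
  have pos: "0 \<le> jbr (x + y + z)" using jbr_pos less_imp_le by blast
  show "(jbr (x + y + z))\<^sup>2 \<le> 6 * m\<^sup>2 * jbr y * jbr z"
    using sq[OF pos e(2,3)] by (simp add: power2_eq_square mult_ac)
  show "(jbr (x + y + z))\<^sup>2 \<le> 6 * m\<^sup>2 * jbr x * jbr y"
    using sq[OF pos e(1,3)] by (simp add: power2_eq_square mult_ac)
  have "(jbr (x + y + z))\<^sup>2 \<le> 4 * m\<^sup>2 * jbr x * jbr z"
    using sq[OF pos e(1,2)] by (simp add: power2_eq_square mult_ac)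
  also have "\<dots> \<le> 6 * m\<^sup>2 * jbr x * jbr z"
    using jbr_ge_1[of x] jbr_ge_1[of z] by (intro mult_right_mono) auto
  finally show "(jbr (x + y + z))\<^sup>2 \<le> 6 * m\<^sup>2 * jbr x * jbr z" .
qed

definition weight_const :: "real \<Rightarrow> real \<Rightarrow> real" where
  "weight_const s \<epsilon> = 3 powr s * 6 powr (\<epsilon> / 2)"

lemma weight_const_nonneg: "0 \<le> weight_const s \<epsilon>"
  unfolding weight_const_def by simp

text \<open>With \<open>\<xi> = x + y + z\<close> the two factors of the phase are \<open>\<xi> - \<xi>\<^sub>1 = y + z\<close> and
  \<open>\<xi> - \<xi>\<^sub>3 = x + y\<close>; one of them absorbs the \<open>\<epsilon>\<close> extra derivatives.\<close>
lemma jbr_sum3_powr_bound: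
  fixes x y z s \<epsilon> :: real
  assumes "0 \<le> s" "0 \<le> \<epsilon>" "\<epsilon> \<le> 2 * s"
  shows "jbr (x + y + z) powr (s + \<epsilon>) \<le> weight_const s \<epsilon> *
     (jbr (y + z) powr \<epsilon> + jbr (x + y) powr \<epsilon>) * (jbr x powr s * jbr y powr s * jbr z powr s)"
proof -
  define m where "m = max (jbr (y + z)) (jbr (x + y))"
  have m1: "1 \<le> m" using jbr_ge_1 unfolding m_def by (simp add: le_max_iff_disj)
  note quad = jbr_sum3_squared_bounds[of y z m x, unfolded m_def, OF max.cobounded1 max.cobounded2,
      folded m_def]
  have "jbr (x + y + z) \<le> jbr x + jbr y + jbr z"
    using jbr_triangle[of "x + y" z] jbr_triangle[of x y] by linarith
  then consider "jbr (x + y + z) \<le> 3 * jbr x" | "jbr (x + y + z) \<le> 3 * jbr y"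
    | "jbr (x + y + z) \<le> 3 * jbr z" by linarith
  then have "jbr (x + y + z) powr (s + \<epsilon>) \<le> weight_const s \<epsilon> * m powr \<epsilon> *
      (jbr x powr s * jbr y powr s * jbr z powr s)"
  proof cases
    case 1
    from interpolated_weight_bound[OF jbr_pos jbr_ge_1 jbr_ge_1 jbr_ge_1 m1 this quad(1) assms]
    show ?thesis by (simp add: weight_const_def)
  next
    case 2
    from interpolated_weight_bound[OF jbr_pos jbr_ge_1 jbr_ge_1 jbr_ge_1 m1 this quad(2) assms]
    show ?thesis by (simp add: weight_const_def mult_ac)
  next
    case 3
    from interpolated_weight_bound[OF jbr_pos jbr_ge_1 jbr_ge_1 jbr_ge_1 m1 this quad(3) assms]
    show ?thesis by (simp add: weight_const_def mult_ac)
  qed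
  also have "\<dots> \<le> weight_const s \<epsilon> * (jbr (y + z) powr \<epsilon> + jbr (x + y) powr \<epsilon>) *
      (jbr x powr s * jbr y powr s * jbr z powr s)"
  proof -
    have "m powr \<epsilon> \<le> jbr (y + z) powr \<epsilon> + jbr (x + y) powr \<epsilon>"
      unfolding m_def by (cases "jbr (y + z) \<le> jbr (x + y)") (auto simp: max_def)
    then show ?thesis
      by (intro mult_right_mono mult_left_mono) (auto simp: weight_const_def)
  qed
  finally show ?thesis .
qed

subsection \<open>A one-dimensional resonance integral\<close>

lemma jbr_powr_neg_le_1: "0 \<le> p \<Longrightarrow> jbr t powr (- p) \<le> 1"
  using jbr_ge_1[of t] powr_mono[of "- p" 0 "jbr t"] by simp

lemma nn_integral_lborel_translate:
  fixes f :: "real \<Rightarrow> ennreal"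
  assumes [measurable]: "f \<in> borel_measurable borel"
  shows "(\<integral>\<^sup>+x. f (x + c) \<partial>lborel) = (\<integral>\<^sup>+x. f x \<partial>lborel)"
  using nn_integral_real_affine[OF assms, of 1 c] by (simp add: add.commute)

lemma nn_integral_even_le:
  fixes f :: "real \<Rightarrow> ennreal"
  assumes [measurable]: "f \<in> borel_measurable borel" and even: "\<And>t. f (- t) = f t"
  shows "(\<integral>\<^sup>+x. f x \<partial>lborel) \<le> 2 * (\<integral>\<^sup>+x. indicator {0..} x * f x \<partial>lborel)"
proof -
  have "(\<integral>\<^sup>+x. f x \<partial>lborel)
      \<le> (\<integral>\<^sup>+x. indicator {0..} x * f x + indicator {0..} (- x) * f (- x) \<partial>lborel)"
    by (intro nn_integral_mono) (auto simp: even indicator_def)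
  also have "\<dots> = (\<integral>\<^sup>+x. indicator {0..} x * f x \<partial>lborel)
      + (\<integral>\<^sup>+x. indicator {0..} (- x) * f (- x) \<partial>lborel)"
    by (rule nn_integral_add) auto
  also have "(\<integral>\<^sup>+x. indicator {0..} (- x) * f (- x) \<partial>lborel) = (\<integral>\<^sup>+x. indicator {0..} x * f x \<partial>lborel)"
    using nn_integral_real_affine[of "\<lambda>x. indicator {0..} x * f x" "- 1" 0] by simp
  finally show ?thesis by (simp add: mult_2)
qed

lemma nn_integral_powr_tail:
  fixes p :: real
  assumes "1 < p"
  shows "(\<integral>\<^sup>+x. ennreal (indicator {1..} x * x powr (- p)) \<partial>lborel) = ennreal (1 / (p - 1))"
proof -
  have "((\<lambda>x. x powr (- p)) has_integral - (1 powr (- p + 1)) / (- p + 1)) {1..}"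
    using assms by (intro has_integral_powr_to_inf) auto
  then have "((\<lambda>x. x powr (- p)) has_integral 1 / (p - 1)) {1..}"
    by (simp add: minus_divide_right)
  from nn_integral_has_integral_lebesgue[OF _ this] show ?thesis by simp
qed

lemma nn_integral_jbr_powr_le:
  fixes p :: real
  assumes p: "1 < p"
  shows "(\<integral>\<^sup>+t. ennreal (jbr t powr (- p)) \<partial>lborel) \<le> ennreal (2 + 2 / (p - 1))"
proof -
  have pointwise: "indicator {0..} t * ennreal (jbr t powr (- p))
      \<le> indicator {0..<1} t + ennreal (indicator {1..} t * t powr (- p))" for t :: real
  proof (cases "t < 1")
    case True
    then show ?thesis
      using jbr_powr_neg_le_1[of p t] p by (auto simp: indicator_def)
  next
    case False
    then have "jbr t powr (- p) \<le> t powr (- p)"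
      using abs_le_jbr[of t] p by (intro powr_mono2') auto
    then show ?thesis using False by (simp add: indicator_def)
  qed
  have "(\<integral>\<^sup>+t. ennreal (jbr t powr (- p)) \<partial>lborel)
      \<le> 2 * (\<integral>\<^sup>+t. indicator {0..} t * ennreal (jbr t powr (- p)) \<partial>lborel)"
    by (rule nn_integral_even_le) (auto simp: jbr_minus)
  also have "\<dots> \<le> 2 * (\<integral>\<^sup>+t. indicator {0..<1} t + ennreal (indicator {1..} t * t powr (- p)) \<partial>lborel)"
    by (intro mult_left_mono nn_integral_mono pointwise) simp
  also have "\<dots> = 2 * (1 + ennreal (1 / (p - 1)))"
    using nn_integral_powr_tail[OF p] by (subst nn_integral_add) auto
  also have "\<dots> = ennreal (2 + 2 / (p - 1))"
    using p ennreal_mult[of 2 "1 / (p - 1)"] by (simp add: ennreal_plus distrib_left)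
  finally show ?thesis .
qed

lemma nn_integral_abs_powr_ball_le:
  fixes \<sigma> r :: real
  assumes "0 < \<sigma>" "\<sigma> < 1" "0 < r"
  shows "(\<integral>\<^sup>+w. ennreal (indicator {w. \<bar>w\<bar> < r} w * \<bar>w\<bar> powr (- \<sigma>)) \<partial>lborel)
    \<le> ennreal (2 * r powr (1 - \<sigma>) / (1 - \<sigma>))"
proof -
  have "(\<integral>\<^sup>+w. ennreal (indicator {w. \<bar>w\<bar> < r} w * \<bar>w\<bar> powr (- \<sigma>)) \<partial>lborel)
      \<le> 2 * (\<integral>\<^sup>+w. indicator {0..} w * ennreal (indicator {w. \<bar>w\<bar> < r} w * \<bar>w\<bar> powr (- \<sigma>)) \<partial>lborel)"
    by (rule nn_integral_even_le) (auto simp: indicator_def)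
  also have "\<dots> \<le> 2 * (\<integral>\<^sup>+w. ennreal (indicator {0..r} w * w powr (- \<sigma>)) \<partial>lborel)"
    by (intro mult_left_mono nn_integral_mono) (auto simp: indicator_def)
  also have "(\<integral>\<^sup>+w. ennreal (indicator {0..r} w * w powr (- \<sigma>)) \<partial>lborel)
      = ennreal (r powr (- \<sigma> + 1) / (- \<sigma> + 1))"
  proof -
    have "((\<lambda>x. x powr (- \<sigma>)) has_integral (r powr (- \<sigma> + 1) / (- \<sigma> + 1))) {0..r}"
      using assms by (intro has_integral_powr_from_0) auto
    from nn_integral_has_integral_lebesgue[OF _ this] show ?thesis by simp
  qed
  also have "2 * ennreal (r powr (- \<sigma> + 1) / (- \<sigma> + 1)) = ennreal (2 * r powr (1 - \<sigma>) / (1 - \<sigma>))"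
    using ennreal_mult[of 2 "r powr (- \<sigma> + 1) / (- \<sigma> + 1)"] assms by simp
  finally show ?thesis .
qed

lemma jbr_squared_div_3_le:
  assumes "\<bar>t\<bar> / 2 \<le> \<bar>t - d\<bar>"
  shows "(jbr t)\<^sup>2 / 3 \<le> jbr (t * (t - d))"
proof -
  have "\<bar>t\<bar> * (\<bar>t\<bar> / 2) \<le> \<bar>t\<bar> * \<bar>t - d\<bar>"
    using assms by (intro mult_left_mono) auto
  then have "t\<^sup>2 / 2 \<le> \<bar>t * (t - d)\<bar>"
    by (simp add: abs_mult power2_eq_square)
  then have far: "(t\<^sup>2 / 2)\<^sup>2 \<le> (t * (t - d))\<^sup>2"
    using power_mono[of "t\<^sup>2 / 2" "\<bar>t * (t - d)\<bar>" 2] by simp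
  have "((jbr t)\<^sup>2 / 3)\<^sup>2 \<le> 1 + (t\<^sup>2 / 2)\<^sup>2"
  proof -
    define u where "u = t\<^sup>2"
    have "0 \<le> u" "0 \<le> (u - 1)\<^sup>2" unfolding u_def by simp_all
    then have "(1 + u)\<^sup>2 \<le> 9 * (1 + (u / 2)\<^sup>2)" by (simp add: power2_eq_square algebra_simps)
    moreover have "((1 + u) / 3)\<^sup>2 = (1 + u)\<^sup>2 / 9" by (simp add: power_divide)
    ultimately show ?thesis unfolding u_def jbr_def by simp
  qed
  also have "\<dots> \<le> (jbr (t * (t - d)))\<^sup>2"
    using far unfolding jbr_def by simp
  finally show ?thesis
    by (rule power2_le_imp_le[OF _ less_imp_le[OF jbr_pos]])
qed

lemma resonance_bound_far:
  assumes "0 < \<sigma>" "\<sigma> < 1" and far: "\<bar>t\<bar> / 2 \<le> \<bar>t - d\<bar>"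
  shows "jbr (t * (t - d)) powr (- \<sigma>) * jbr t powr \<epsilon> \<le> 3 * jbr t powr (\<epsilon> - 2 * \<sigma>)"
proof -
  have "jbr (t * (t - d)) powr (- \<sigma>) * jbr t powr \<epsilon> \<le> ((jbr t)\<^sup>2 / 3) powr (- \<sigma>) * jbr t powr \<epsilon>"
    using jbr_squared_div_3_le[OF far] assms jbr_pos[of t] by (intro mult_right_mono powr_mono2') auto
  also have "\<dots> = 3 powr \<sigma> * jbr t powr (\<epsilon> - 2 * \<sigma>)"
  proof -
    have "((jbr t)\<^sup>2 / 3) powr (- \<sigma>) = jbr t powr (- 2 * \<sigma>) / 3 powr (- \<sigma>)"
      using jbr_pos[of t] by (simp add: powr_divide power2_powr)
    also have "\<dots> = 3 powr \<sigma> * jbr t powr (- 2 * \<sigma>)"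
      by (simp add: powr_minus_divide)
    finally show ?thesis
      by (simp add: mult.assoc powr_add[symmetric])
  qed
  also have "\<dots> \<le> 3 * jbr t powr (\<epsilon> - 2 * \<sigma>)"
    using assms powr_mono[of \<sigma> 1 3] by (intro mult_right_mono) auto
  finally show ?thesis .
qed

lemma resonance_bound_near_small:
  assumes "0 < \<sigma>" "0 \<le> \<epsilon>" "\<epsilon> < 1" "\<bar>t - d\<bar> < \<bar>t\<bar> / 2" "\<bar>d\<bar> \<le> 1"
  shows "t \<in> {-2..2}" and "jbr (t * (t - d)) powr (- \<sigma>) * jbr t powr \<epsilon> \<le> 3"
proof -
  have "\<bar>t\<bar> \<le> \<bar>t - d\<bar> + \<bar>d\<bar>" by linarith
  then have "\<bar>t\<bar> \<le> 2" using assms by linarith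
  then show t: "t \<in> {-2..2}" by auto
  have "jbr (t * (t - d)) powr (- \<sigma>) * jbr t powr \<epsilon> \<le> jbr t powr 1"
    using jbr_powr_neg_le_1[of \<sigma> "t * (t - d)"] jbr_ge_1[of t] assms powr_mono[of \<epsilon> 1 "jbr t"]
    by (simp add: mult_le_one order_trans[OF mult_right_mono[of _ 1]])
  also have "\<dots> \<le> 3"
  proof -
    have "1 + t\<^sup>2 \<le> 3\<^sup>2" using t abs_le_square_iff[of t 2] by auto
    then have "jbr t \<le> 3" unfolding jbr_def by (rule real_le_lsqrt[rotated]) auto
    then show ?thesis using jbr_pos[of t] by simp
  qed
  finally show "jbr (t * (t - d)) powr (- \<sigma>) * jbr t powr \<epsilon> \<le> 3" .
qed

lemma resonance_bound_near_large:
  assumes "0 < \<sigma>" "0 \<le> \<epsilon>" and near: "\<bar>t - d\<bar> < \<bar>t\<bar> / 2" and d: "1 < \<bar>d\<bar>" and "t \<noteq> d"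
  shows "\<bar>t - d\<bar> < \<bar>d\<bar>" and "jbr (t * (t - d)) powr (- \<sigma>) * jbr t powr \<epsilon>
    \<le> (2 * \<bar>d\<bar> / 3) powr (- \<sigma>) * (3 * \<bar>d\<bar>) powr \<epsilon> * \<bar>t - d\<bar> powr (- \<sigma>)"
proof -
  have t_upper: "\<bar>t\<bar> < 2 * \<bar>d\<bar>" and t_lower: "2 * \<bar>d\<bar> / 3 < \<bar>t\<bar>" using near by linarith+
  show "\<bar>t - d\<bar> < \<bar>d\<bar>" using near t_upper by linarith
  have "(2 * \<bar>d\<bar> / 3) * \<bar>t - d\<bar> \<le> \<bar>t * (t - d)\<bar>"
    unfolding abs_mult using t_lower by (intro mult_right_mono) auto
  then have phase: "(2 * \<bar>d\<bar> / 3) * \<bar>t - d\<bar> \<le> jbr (t * (t - d))"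
    using abs_le_jbr order_trans by blast
  have "t\<^sup>2 \<le> (2 * \<bar>d\<bar>)\<^sup>2"
    using t_upper abs_le_square_iff[of t "2 * \<bar>d\<bar>"] by simp
  moreover have "1 \<le> d\<^sup>2"
    using d by (metis abs_ge_self less_le one_le_power power2_abs)
  ultimately have "1 + t\<^sup>2 \<le> (3 * \<bar>d\<bar>)\<^sup>2" by (simp add: power2_eq_square)
  then have weight: "jbr t \<le> 3 * \<bar>d\<bar>"
    unfolding jbr_def by (rule real_le_lsqrt[rotated]) auto
  have "jbr (t * (t - d)) powr (- \<sigma>) * jbr t powr \<epsilon>
      \<le> ((2 * \<bar>d\<bar> / 3) * \<bar>t - d\<bar>) powr (- \<sigma>) * (3 * \<bar>d\<bar>) powr \<epsilon>"
  proof (rule mult_mono)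
    show "jbr (t * (t - d)) powr (- \<sigma>) \<le> ((2 * \<bar>d\<bar> / 3) * \<bar>t - d\<bar>) powr (- \<sigma>)"
      by (rule powr_mono2') (use phase assms in auto)
    show "jbr t powr \<epsilon> \<le> (3 * \<bar>d\<bar>) powr \<epsilon>"
      by (rule powr_mono2) (use weight assms jbr_pos[of t] in auto)
  qed auto
  moreover have "((2 * \<bar>d\<bar> / 3) * \<bar>t - d\<bar>) powr (- \<sigma>) = (2 * \<bar>d\<bar> / 3) powr (- \<sigma>) * \<bar>t - d\<bar> powr (- \<sigma>)"
    by (rule powr_mult)
  ultimately show "jbr (t * (t - d)) powr (- \<sigma>) * jbr t powr \<epsilon>
      \<le> (2 * \<bar>d\<bar> / 3) powr (- \<sigma>) * (3 * \<bar>d\<bar>) powr \<epsilon> * \<bar>t - d\<bar> powr (- \<sigma>)"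
    by (simp add: mult_ac)
qed

definition resonance_const :: "real \<Rightarrow> real \<Rightarrow> real" where
  "resonance_const \<sigma> \<epsilon> = 3 * (2 + 2 / (2 * \<sigma> - \<epsilon> - 1)) + 12 + 9 / (1 - \<sigma>)"

lemma resonance_const_nonneg: "\<sigma> < 1 \<Longrightarrow> 1 + \<epsilon> < 2 * \<sigma> \<Longrightarrow> 0 \<le> resonance_const \<sigma> \<epsilon>"
  unfolding resonance_const_def by simp

lemma resonant_part_const_le:
  fixes d \<sigma> \<epsilon> :: real
  assumes "\<sigma> < 1" "\<epsilon> < 1" "1 + \<epsilon> < 2 * \<sigma>" and d: "1 < \<bar>d\<bar>"
  shows "(2 * \<bar>d\<bar> / 3) powr (- \<sigma>) * (3 * \<bar>d\<bar>) powr \<epsilon> * (2 * \<bar>d\<bar> powr (1 - \<sigma>) / (1 - \<sigma>))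
    \<le> 9 / (1 - \<sigma>)"
proof -
  have "(2 * \<bar>d\<bar> / 3) powr (- \<sigma>) = (3 / 2) powr \<sigma> * \<bar>d\<bar> powr (- \<sigma>)"
    using powr_mult[of "2 / 3" "\<bar>d\<bar>" "- \<sigma>"] by (simp add: powr_minus_divide powr_divide)
  moreover have "(3 * \<bar>d\<bar>) powr \<epsilon> = 3 powr \<epsilon> * \<bar>d\<bar> powr \<epsilon>"
    by (simp add: powr_mult)
  moreover have "\<bar>d\<bar> powr (- \<sigma>) * \<bar>d\<bar> powr \<epsilon> * \<bar>d\<bar> powr (1 - \<sigma>) = \<bar>d\<bar> powr (1 + \<epsilon> - 2 * \<sigma>)"
    by (simp add: powr_add[symmetric] add_ac)
  ultimately have "(2 * \<bar>d\<bar> / 3) powr (- \<sigma>) * (3 * \<bar>d\<bar>) powr \<epsilon> * (2 * \<bar>d\<bar> powr (1 - \<sigma>) / (1 - \<sigma>))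
      = ((3 / 2) powr \<sigma> * 3 powr \<epsilon> * 2 * \<bar>d\<bar> powr (1 + \<epsilon> - 2 * \<sigma>)) / (1 - \<sigma>)"
    by (simp add: mult_ac)
  also have "\<dots> \<le> ((3 / 2) * 3 * 2 * 1) / (1 - \<sigma>)"
  proof -
    have "\<bar>d\<bar> powr (1 + \<epsilon> - 2 * \<sigma>) \<le> \<bar>d\<bar> powr 0"
      by (rule powr_mono) (use assms in auto)
    moreover have "d \<noteq> 0" using d by auto
    ultimately have "\<bar>d\<bar> powr (1 + \<epsilon> - 2 * \<sigma>) \<le> 1" by simp
    then show ?thesis
      using assms powr_mono[of \<sigma> 1 "3 / 2 :: real"] powr_mono[of \<epsilon> 1 "3 :: real"]
      by (intro divide_right_mono mult_mono) auto
  qed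
  finally show ?thesis by simp
qed

lemma nn_integral_resonant_part_le:
  fixes d \<sigma> \<epsilon> :: real
  assumes "0 < \<sigma>" "\<sigma> < 1" "\<epsilon> < 1" "1 + \<epsilon> < 2 * \<sigma>" and "1 < \<bar>d\<bar>"
  shows "(\<integral>\<^sup>+t. ennreal ((2 * \<bar>d\<bar> / 3) powr (- \<sigma>) * (3 * \<bar>d\<bar>) powr \<epsilon> *
      (indicator {w. \<bar>w\<bar> < \<bar>d\<bar>} (t - d) * \<bar>t - d\<bar> powr (- \<sigma>))) \<partial>lborel) \<le> ennreal (9 / (1 - \<sigma>))"
proof -
  define K where "K = (2 * \<bar>d\<bar> / 3) powr (- \<sigma>) * (3 * \<bar>d\<bar>) powr \<epsilon>"
  define h where "h w = ennreal (indicator {w. \<bar>w\<bar> < \<bar>d\<bar>} w * \<bar>w\<bar> powr (- \<sigma>))" for w :: real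
  have [measurable]: "h \<in> borel_measurable borel" unfolding h_def[abs_def] by measurable
  have K0: "0 \<le> K" unfolding K_def by simp
  have "(\<integral>\<^sup>+t. ennreal (K * (indicator {w. \<bar>w\<bar> < \<bar>d\<bar>} (t - d) * \<bar>t - d\<bar> powr (- \<sigma>))) \<partial>lborel)
      = ennreal K * (\<integral>\<^sup>+t. h (t + (- d)) \<partial>lborel)"
    unfolding h_def using K0 by (subst nn_integral_cmult[symmetric]) (auto simp: ennreal_mult)
  also have "\<dots> = ennreal K * (\<integral>\<^sup>+t. h t \<partial>lborel)"
    by (simp only: nn_integral_lborel_translate[of h "- d"] \<open>h \<in> borel_measurable borel\<close>)
  also have "\<dots> \<le> ennreal K * ennreal (2 * \<bar>d\<bar> powr (1 - \<sigma>) / (1 - \<sigma>))"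
    unfolding h_def using nn_integral_abs_powr_ball_le[of \<sigma> "\<bar>d\<bar>"] assms by (intro mult_left_mono) auto
  also have "\<dots> = ennreal (K * (2 * \<bar>d\<bar> powr (1 - \<sigma>) / (1 - \<sigma>)))"
    by (subst ennreal_mult) (use K0 assms in auto)
  also have "\<dots> \<le> ennreal (9 / (1 - \<sigma>))"
    unfolding K_def using resonant_part_const_le[of \<sigma> \<epsilon> d] assms by (intro ennreal_leI) auto
  finally show ?thesis unfolding K_def .
qed

definition near_resonance_majorant :: "real \<Rightarrow> real \<Rightarrow> real \<Rightarrow> real \<Rightarrow> real" where
  "near_resonance_majorant \<sigma> \<epsilon> d t = (if \<bar>d\<bar> \<le> 1 then 3 * indicator {-2..2} t
      else (2 * \<bar>d\<bar> / 3) powr (- \<sigma>) * (3 * \<bar>d\<bar>) powr \<epsilon> *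
        (indicator {w. \<bar>w\<bar> < \<bar>d\<bar>} (t - d) * \<bar>t - d\<bar> powr (- \<sigma>)))"

lemma near_resonance_majorant_nonneg: "0 \<le> near_resonance_majorant \<sigma> \<epsilon> d t"
  unfolding near_resonance_majorant_def by simp

lemma near_resonance_majorant_measurable [measurable]:
  "near_resonance_majorant \<sigma> \<epsilon> d \<in> borel_measurable borel"
  unfolding near_resonance_majorant_def by measurable

lemma resonance_integrand_le:
  assumes \<sigma>: "0 < \<sigma>" "\<sigma> < 1" and \<epsilon>: "0 \<le> \<epsilon>" "\<epsilon> < 1" and "t \<noteq> d"
  shows "jbr (t * (t - d)) powr (- \<sigma>) * jbr t powr \<epsilon>
    \<le> 3 * jbr t powr (\<epsilon> - 2 * \<sigma>) + near_resonance_majorant \<sigma> \<epsilon> d t"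
proof -
  have far_nonneg: "0 \<le> 3 * jbr t powr (\<epsilon> - 2 * \<sigma>)" by simp
  note near_nonneg = near_resonance_majorant_nonneg[of \<sigma> \<epsilon> d t]
  consider "\<bar>t\<bar> / 2 \<le> \<bar>t - d\<bar>" | "\<bar>t - d\<bar> < \<bar>t\<bar> / 2" "\<bar>d\<bar> \<le> 1" | "\<bar>t - d\<bar> < \<bar>t\<bar> / 2" "1 < \<bar>d\<bar>"
    by linarith
  then show ?thesis
  proof cases
    case 1
    then have "jbr (t * (t - d)) powr (- \<sigma>) * jbr t powr \<epsilon> \<le> 3 * jbr t powr (\<epsilon> - 2 * \<sigma>)"
      by (rule resonance_bound_far[OF \<sigma>])
    with near_nonneg show ?thesis by linarith
  next
    case 2
    then have "jbr (t * (t - d)) powr (- \<sigma>) * jbr t powr \<epsilon> \<le> near_resonance_majorant \<sigma> \<epsilon> d t"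
      using resonance_bound_near_small[OF \<sigma>(1) \<epsilon>] unfolding near_resonance_majorant_def by auto
    with far_nonneg show ?thesis by linarith
  next
    case 3
    then have "jbr (t * (t - d)) powr (- \<sigma>) * jbr t powr \<epsilon> \<le> near_resonance_majorant \<sigma> \<epsilon> d t"
      using resonance_bound_near_large[OF \<sigma>(1) \<epsilon>(1) _ _ \<open>t \<noteq> d\<close>]
      unfolding near_resonance_majorant_def by auto
    with far_nonneg show ?thesis by linarith
  qed
qed

lemma nn_integral_near_resonance_majorant_le:
  assumes "0 < \<sigma>" "\<sigma> < 1" "\<epsilon> < 1" "1 + \<epsilon> < 2 * \<sigma>"
  shows "(\<integral>\<^sup>+t. ennreal (near_resonance_majorant \<sigma> \<epsilon> d t) \<partial>lborel) \<le> ennreal (12 + 9 / (1 - \<sigma>))"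
proof (cases "\<bar>d\<bar> \<le> 1")
  case True
  then have "(\<integral>\<^sup>+t. ennreal (near_resonance_majorant \<sigma> \<epsilon> d t) \<partial>lborel)
      = (\<integral>\<^sup>+t. 3 * indicator {-2..2::real} t \<partial>lborel)"
    unfolding near_resonance_majorant_def by (intro nn_integral_cong) (auto simp: indicator_def)
  also have "\<dots> = ennreal 12"
    by (subst nn_integral_cmult) (auto simp flip: ennreal_mult)
  finally show ?thesis using assms by (simp add: ennreal_leI)
next
  case False
  then have "(\<integral>\<^sup>+t. ennreal (near_resonance_majorant \<sigma> \<epsilon> d t) \<partial>lborel) \<le> ennreal (9 / (1 - \<sigma>))"
    unfolding near_resonance_majorant_def using nn_integral_resonant_part_le[OF assms] by simp
  then show ?thesis by (rule order_trans) (intro ennreal_leI, simp)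
qed

lemma resonance_integral_bound:
  fixes d \<sigma> \<epsilon> :: real
  assumes \<sigma>: "0 < \<sigma>" "\<sigma> < 1" and \<epsilon>: "0 \<le> \<epsilon>" "\<epsilon> < 1" and \<sigma>\<epsilon>: "1 + \<epsilon> < 2 * \<sigma>"
  shows "(\<integral>\<^sup>+t. ennreal (jbr (t * (t - d)) powr (- \<sigma>) * jbr t powr \<epsilon>) \<partial>lborel)
    \<le> ennreal (resonance_const \<sigma> \<epsilon>)"
proof -
  have "AE t in lborel. ennreal (jbr (t * (t - d)) powr (- \<sigma>) * jbr t powr \<epsilon>)
      \<le> ennreal (3 * jbr t powr (\<epsilon> - 2 * \<sigma>)) + ennreal (near_resonance_majorant \<sigma> \<epsilon> d t)"
    using AE_lborel_singleton[of d]
    by eventually_elim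
      (use resonance_integrand_le[OF \<sigma> \<epsilon>] near_resonance_majorant_nonneg in \<open>simp flip: ennreal_plus\<close>)
  then have "(\<integral>\<^sup>+t. ennreal (jbr (t * (t - d)) powr (- \<sigma>) * jbr t powr \<epsilon>) \<partial>lborel)
      \<le> (\<integral>\<^sup>+t. ennreal (3 * jbr t powr (\<epsilon> - 2 * \<sigma>)) \<partial>lborel)
        + (\<integral>\<^sup>+t. ennreal (near_resonance_majorant \<sigma> \<epsilon> d t) \<partial>lborel)"
    by (simp add: nn_integral_mono_AE flip: nn_integral_add)
  also have "(\<integral>\<^sup>+t. ennreal (3 * jbr t powr (\<epsilon> - 2 * \<sigma>)) \<partial>lborel)
      = 3 * (\<integral>\<^sup>+t. ennreal (jbr t powr (- (2 * \<sigma> - \<epsilon>))) \<partial>lborel)"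
    by (subst nn_integral_cmult[symmetric]) (auto simp: ennreal_mult)
  also have "\<dots> \<le> 3 * ennreal (2 + 2 / (2 * \<sigma> - \<epsilon> - 1))"
    using nn_integral_jbr_powr_le[of "2 * \<sigma> - \<epsilon>"] \<sigma>\<epsilon> by (intro mult_left_mono) auto
  also have "(\<integral>\<^sup>+t. ennreal (near_resonance_majorant \<sigma> \<epsilon> d t) \<partial>lborel) \<le> ennreal (12 + 9 / (1 - \<sigma>))"
    using nn_integral_near_resonance_majorant_le[OF \<sigma> \<epsilon>(2) \<sigma>\<epsilon>] .
  finally have "(\<integral>\<^sup>+t. ennreal (jbr (t * (t - d)) powr (- \<sigma>) * jbr t powr \<epsilon>) \<partial>lborel)
      \<le> 3 * ennreal (2 + 2 / (2 * \<sigma> - \<epsilon> - 1)) + ennreal (12 + 9 / (1 - \<sigma>))"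
    by (simp add: add_mono)
  also have "\<dots> = ennreal (resonance_const \<sigma> \<epsilon>)"
  proof -
    have "3 * ennreal (2 + 2 / (2 * \<sigma> - \<epsilon> - 1)) = ennreal (3 * (2 + 2 / (2 * \<sigma> - \<epsilon> - 1)))"
      using \<sigma>\<epsilon> by (subst ennreal_mult) auto
    then show ?thesis
      using \<sigma> \<sigma>\<epsilon> by (simp only:) (simp add: resonance_const_def flip: ennreal_plus)
  qed
  finally show ?thesis .
qed

lemma resonance_integral_shifted_bound:
  fixes c1 c2 \<sigma> \<epsilon> :: real
  assumes "0 < \<sigma>" "\<sigma> < 1" "0 \<le> \<epsilon>" "\<epsilon> < 1" "1 + \<epsilon> < 2 * \<sigma>"
  shows "(\<integral>\<^sup>+t. ennreal (jbr ((t - c1) * (t - c2)) powr (- \<sigma>) * jbr (t - c1) powr \<epsilon>) \<partial>lborel)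
    \<le> ennreal (resonance_const \<sigma> \<epsilon>)"
proof -
  define f where "f u = ennreal (jbr (u * (u - (c2 - c1))) powr (- \<sigma>) * jbr u powr \<epsilon>)" for u
  have [measurable]: "f \<in> borel_measurable borel" unfolding f_def[abs_def] by measurable
  have "(\<integral>\<^sup>+t. ennreal (jbr ((t - c1) * (t - c2)) powr (- \<sigma>) * jbr (t - c1) powr \<epsilon>) \<partial>lborel)
      = (\<integral>\<^sup>+t. f (t + (- c1)) \<partial>lborel)"
    unfolding f_def by (simp add: algebra_simps)
  also have "\<dots> = (\<integral>\<^sup>+t. f t \<partial>lborel)" by (rule nn_integral_lborel_translate) measurable
  also have "\<dots> \<le> ennreal (resonance_const \<sigma> \<epsilon>)"
    unfolding f_def by (rule resonance_integral_bound[OF assms])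
  finally show ?thesis .
qed

definition resonance_kernel :: "real \<Rightarrow> real \<Rightarrow> real \<Rightarrow> real \<Rightarrow> real" where
  "resonance_kernel \<sigma> \<epsilon> a b = jbr (a * b) powr (- \<sigma>) * (jbr a powr \<epsilon> + jbr b powr \<epsilon>)"

lemma resonance_kernel_nonneg: "0 \<le> resonance_kernel \<sigma> \<epsilon> a b"
  unfolding resonance_kernel_def by simp

lemma resonance_kernel_minus_left: "resonance_kernel \<sigma> \<epsilon> (- a) b = resonance_kernel \<sigma> \<epsilon> a b"
  unfolding resonance_kernel_def by (simp add: jbr_minus)

lemma resonance_kernel_measurable [measurable (raw)]:
  assumes [measurable]: "f \<in> borel_measurable M" "g \<in> borel_measurable M"
  shows "(\<lambda>x. resonance_kernel \<sigma> \<epsilon> (f x) (g x)) \<in> borel_measurable M"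
  unfolding resonance_kernel_def by measurable

lemma nn_integral_resonance_kernel_le:
  fixes c1 c2 \<sigma> \<epsilon> :: real
  assumes "0 < \<sigma>" "\<sigma> < 1" "0 \<le> \<epsilon>" "\<epsilon> < 1" "1 + \<epsilon> < 2 * \<sigma>"
  shows "(\<integral>\<^sup>+t. ennreal (resonance_kernel \<sigma> \<epsilon> (t - c1) (t - c2)) \<partial>lborel)
    \<le> ennreal (2 * resonance_const \<sigma> \<epsilon>)"
proof -
  have "(\<integral>\<^sup>+t. ennreal (resonance_kernel \<sigma> \<epsilon> (t - c1) (t - c2)) \<partial>lborel) =
     (\<integral>\<^sup>+t. ennreal (jbr ((t - c1) * (t - c2)) powr (- \<sigma>) * jbr (t - c1) powr \<epsilon>) +
            ennreal (jbr ((t - c2) * (t - c1)) powr (- \<sigma>) * jbr (t - c2) powr \<epsilon>) \<partial>lborel)"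
    unfolding resonance_kernel_def
    by (intro nn_integral_cong) (simp add: distrib_left ennreal_plus mult.commute)
  also have "\<dots> = (\<integral>\<^sup>+t. ennreal (jbr ((t - c1) * (t - c2)) powr (- \<sigma>) * jbr (t - c1) powr \<epsilon>) \<partial>lborel) +
      (\<integral>\<^sup>+t. ennreal (jbr ((t - c2) * (t - c1)) powr (- \<sigma>) * jbr (t - c2) powr \<epsilon>) \<partial>lborel)"
    by (rule nn_integral_add) measurable
  also have "\<dots> \<le> ennreal (resonance_const \<sigma> \<epsilon>) + ennreal (resonance_const \<sigma> \<epsilon>)"
    by (intro add_mono resonance_integral_shifted_bound assms)
  also have "\<dots> = ennreal (2 * resonance_const \<sigma> \<epsilon>)"
    using resonance_const_nonneg[of \<sigma> \<epsilon>] assms by (simp flip: ennreal_plus)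
  finally show ?thesis .
qed

text \<open>On triples \<open>(\<xi>, \<xi>\<^sub>1, \<xi>\<^sub>3)\<close>, with \<open>\<xi>\<^sub>2 = \<xi> - \<xi>\<^sub>1 - \<xi>\<^sub>3\<close>: the absolute value of
  \<^const>\<open>T_integrand\<close> with the weight \<open>\<langle>\<xi>\<rangle>\<^bsup>s+\<epsilon>\<^esup>\<close> of the target space and the
  inverse weights \<open>\<langle>\<xi>\<^sub>j\<rangle>\<^sup>-\<^sup>s\<close> of the three inputs moved onto the kernel.\<close>
definition smoothing_kernel :: "real \<Rightarrow> real \<Rightarrow> real \<Rightarrow> real \<times> real \<times> real \<Rightarrow> real" where
  "smoothing_kernel \<sigma> s \<epsilon> = (\<lambda>(\<xi>, x, z). jbr (Phi \<xi> x (\<xi> - x - z) z) powr (- \<sigma>) * jbr \<xi> powr (s + \<epsilon>) *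
      (jbr x powr (- s) * jbr (\<xi> - x - z) powr (- s) * jbr z powr (- s)))"

lemma smoothing_kernel_nonneg: "0 \<le> smoothing_kernel \<sigma> s \<epsilon> p"
  unfolding smoothing_kernel_def by (simp add: case_prod_beta)

lemma smoothing_kernel_measurable [measurable]:
  "smoothing_kernel \<sigma> s \<epsilon> \<in> borel_measurable (lborel \<Otimes>\<^sub>M lborel \<Otimes>\<^sub>M lborel)"
  unfolding smoothing_kernel_def Phi_def by measurable

lemma smoothing_kernel_le:
  assumes "0 \<le> s" "0 \<le> \<epsilon>" "\<epsilon> \<le> 2 * s"
  shows "smoothing_kernel \<sigma> s \<epsilon> (\<xi>, x, z) \<le> weight_const s \<epsilon> * resonance_kernel \<sigma> \<epsilon> (\<xi> - x) (\<xi> - z)"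
proof -
  define y where "y = \<xi> - x - z"
  define P where "P = jbr x powr s * jbr y powr s * jbr z powr s"
  define P' where "P' = jbr x powr (- s) * jbr y powr (- s) * jbr z powr (- s)"
  have "P * P' = 1"
    unfolding P_def P'_def using jbr_pos[of x] jbr_pos[of y] jbr_pos[of z]
    by (simp add: powr_minus field_simps)
  have weight: "jbr \<xi> powr (s + \<epsilon>) \<le> weight_const s \<epsilon> * (jbr (\<xi> - x) powr \<epsilon> + jbr (\<xi> - z) powr \<epsilon>) * P"
    using jbr_sum3_powr_bound[OF assms, of x y z] unfolding P_def y_def by simp
  have "smoothing_kernel \<sigma> s \<epsilon> (\<xi>, x, z) = jbr ((\<xi> - x) * (\<xi> - z)) powr (- \<sigma>) * (jbr \<xi> powr (s + \<epsilon>) * P')"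
    unfolding smoothing_kernel_def Phi_def P'_def y_def by (simp add: mult_ac)
  also have "\<dots> \<le> jbr ((\<xi> - x) * (\<xi> - z)) powr (- \<sigma>) *
      (weight_const s \<epsilon> * (jbr (\<xi> - x) powr \<epsilon> + jbr (\<xi> - z) powr \<epsilon>) * P * P')"
    using weight unfolding P'_def by (intro mult_left_mono mult_right_mono) auto
  also have "\<dots> = weight_const s \<epsilon> * resonance_kernel \<sigma> \<epsilon> (\<xi> - x) (\<xi> - z)"
    unfolding resonance_kernel_def using \<open>P * P' = 1\<close> by (simp add: mult_ac)
  finally show ?thesis .
qed

lemma smoothing_kernel_integral_out_le:
  assumes "0 \<le> s" "0 \<le> \<epsilon>" "\<epsilon> \<le> 2 * s" "\<epsilon> < 1" "0 < \<sigma>" "\<sigma> < 1" "1 + \<epsilon> < 2 * \<sigma>"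
  shows "(\<integral>\<^sup>+\<xi>. ennreal (smoothing_kernel \<sigma> s \<epsilon> (\<xi>, p)) \<partial>lborel)
    \<le> ennreal (weight_const s \<epsilon> * (2 * resonance_const \<sigma> \<epsilon>))"
proof -
  obtain x z where p: "p = (x, z)" by fastforce
  have "(\<integral>\<^sup>+\<xi>. ennreal (smoothing_kernel \<sigma> s \<epsilon> (\<xi>, p)) \<partial>lborel)
      \<le> (\<integral>\<^sup>+\<xi>. ennreal (weight_const s \<epsilon>) * ennreal (resonance_kernel \<sigma> \<epsilon> (\<xi> - x) (\<xi> - z)) \<partial>lborel)"
    unfolding p using smoothing_kernel_le[OF assms(1-3)] weight_const_nonneg resonance_kernel_nonneg
    by (intro nn_integral_mono) (simp add: ennreal_mult[symmetric] ennreal_leI)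
  also have "\<dots> = ennreal (weight_const s \<epsilon>) *
      (\<integral>\<^sup>+\<xi>. ennreal (resonance_kernel \<sigma> \<epsilon> (\<xi> - x) (\<xi> - z)) \<partial>lborel)"
    by (rule nn_integral_cmult) measurable
  also have "\<dots> \<le> ennreal (weight_const s \<epsilon>) * ennreal (2 * resonance_const \<sigma> \<epsilon>)"
    using assms by (intro mult_left_mono nn_integral_resonance_kernel_le) auto
  finally show ?thesis
    using weight_const_nonneg resonance_const_nonneg[of \<sigma> \<epsilon>] assms by (simp add: ennreal_mult)
qed

lemma smoothing_kernel_integral_in_le:
  assumes "0 \<le> s" "0 \<le> \<epsilon>" "\<epsilon> \<le> 2 * s" "\<epsilon> < 1" "0 < \<sigma>" "\<sigma> < 1" "1 + \<epsilon> < 2 * \<sigma>"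
  shows "(\<integral>\<^sup>+x. ennreal (smoothing_kernel \<sigma> s \<epsilon> (\<xi>, x, \<xi> - x - y)) \<partial>lborel)
    \<le> ennreal (weight_const s \<epsilon> * (2 * resonance_const \<sigma> \<epsilon>))"
proof -
  have "(\<integral>\<^sup>+x. ennreal (smoothing_kernel \<sigma> s \<epsilon> (\<xi>, x, \<xi> - x - y)) \<partial>lborel)
      \<le> (\<integral>\<^sup>+x. ennreal (weight_const s \<epsilon>) * ennreal (resonance_kernel \<sigma> \<epsilon> (x - \<xi>) (x - (- y))) \<partial>lborel)"
  proof (intro nn_integral_mono)
    fix x
    have "resonance_kernel \<sigma> \<epsilon> (\<xi> - x) (\<xi> - (\<xi> - x - y)) = resonance_kernel \<sigma> \<epsilon> (x - \<xi>) (x - (- y))"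
      using resonance_kernel_minus_left[of \<sigma> \<epsilon> "x - \<xi>" "x + y"] by simp
    then show "ennreal (smoothing_kernel \<sigma> s \<epsilon> (\<xi>, x, \<xi> - x - y))
        \<le> ennreal (weight_const s \<epsilon>) * ennreal (resonance_kernel \<sigma> \<epsilon> (x - \<xi>) (x - (- y)))"
      using smoothing_kernel_le[OF assms(1-3), of \<sigma> \<xi> x "\<xi> - x - y"] weight_const_nonneg
        resonance_kernel_nonneg
      by (simp add: ennreal_mult[symmetric] ennreal_leI)
  qed
  also have "\<dots> = ennreal (weight_const s \<epsilon>) *
      (\<integral>\<^sup>+x. ennreal (resonance_kernel \<sigma> \<epsilon> (x - \<xi>) (x - (- y))) \<partial>lborel)"
    by (rule nn_integral_cmult) measurable
  also have "\<dots> \<le> ennreal (weight_const s \<epsilon>) * ennreal (2 * resonance_const \<sigma> \<epsilon>)"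
    using assms by (intro mult_left_mono nn_integral_resonance_kernel_le) auto
  finally show ?thesis
    using weight_const_nonneg resonance_const_nonneg[of \<sigma> \<epsilon>] assms by (simp add: ennreal_mult)
qed

subsection \<open>A Schur test for trilinear kernel operators\<close>

lemma Cauchy_Schwarz_weighted_nn_integral:
  fixes K F H :: "'a \<Rightarrow> real"
  assumes [measurable]: "K \<in> borel_measurable M" "F \<in> borel_measurable M" "H \<in> borel_measurable M"
    and nonneg: "\<And>x. 0 \<le> K x" "\<And>x. 0 \<le> F x" "\<And>x. 0 \<le> H x"
  shows "(\<integral>\<^sup>+x. ennreal (K x * F x * H x) \<partial>M)\<^sup>2
    \<le> (\<integral>\<^sup>+x. ennreal (K x * (F x)\<^sup>2) \<partial>M) * (\<integral>\<^sup>+x. ennreal (K x * (H x)\<^sup>2) \<partial>M)"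
proof -
  define f where "f x = ennreal (sqrt (K x) * F x)" for x
  define g where "g x = ennreal (sqrt (K x) * H x)" for x
  have [measurable]: "f \<in> borel_measurable M"
    unfolding f_def[abs_def] by measurable
  have [measurable]: "g \<in> borel_measurable M"
    unfolding g_def[abs_def] by measurable
  have "f x * g x = ennreal (K x * F x * H x)" for x
  proof -
    have "f x * g x = ennreal ((sqrt (K x) * F x) * (sqrt (K x) * H x))"
      unfolding f_def g_def using nonneg[of x] by (simp add: ennreal_mult)
    also have "(sqrt (K x) * F x) * (sqrt (K x) * H x) = (sqrt (K x) * sqrt (K x)) * F x * H x"
      by (simp only: mult_ac)
    finally show ?thesis using nonneg[of x] by simp
  qed
  moreover have "f x ^ 2 = ennreal (K x * (F x)\<^sup>2)" "g x ^ 2 = ennreal (K x * (H x)\<^sup>2)" for x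
    unfolding f_def g_def using nonneg[of x] by (subst ennreal_power; simp add: power_mult_distrib)+
  ultimately show ?thesis
    using Cauchy_Schwarz_nn_integral[of f M g] by simp
qed

lemma nn_integral_kernel_middle_le:
  fixes K :: "real \<times> real \<times> real \<Rightarrow> real" and G :: "real \<Rightarrow> real"
  assumes [measurable]: "K \<in> borel_measurable (lborel \<Otimes>\<^sub>M lborel \<Otimes>\<^sub>M lborel)" "G \<in> borel_measurable borel"
    and K_nonneg: "\<And>q. 0 \<le> K q"
    and bound: "\<And>y. (\<integral>\<^sup>+x. ennreal (K (\<xi>, x, \<xi> - x - y)) \<partial>lborel) \<le> B"
  shows "(\<integral>\<^sup>+p. ennreal (K (\<xi>, p) * (G (\<xi> - fst p - snd p))\<^sup>2) \<partial>(lborel \<Otimes>\<^sub>M lborel))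
     \<le> B * (\<integral>\<^sup>+y. ennreal ((G y)\<^sup>2) \<partial>lborel)"
proof -
  define H where "H x z = ennreal (K (\<xi>, x, z) * (G (\<xi> - x - z))\<^sup>2)" for x z
  have H_meas: "(\<lambda>p. H (fst p) (snd p)) \<in> borel_measurable (lborel \<Otimes>\<^sub>M lborel)"
    unfolding H_def by measurable
  have [measurable]: "H x \<in> borel_measurable borel" for x
    unfolding H_def by measurable
  have "(\<integral>\<^sup>+p. ennreal (K (\<xi>, p) * (G (\<xi> - fst p - snd p))\<^sup>2) \<partial>(lborel \<Otimes>\<^sub>M lborel))
      = (\<integral>\<^sup>+x. \<integral>\<^sup>+z. H x z \<partial>lborel \<partial>lborel)"
    using lborel.nn_integral_fst[OF H_meas] unfolding H_def by simp
  also have "\<dots> = (\<integral>\<^sup>+x. \<integral>\<^sup>+y. ennreal (K (\<xi>, x, \<xi> - x - y)) * ennreal ((G y)\<^sup>2) \<partial>lborel \<partial>lborel)"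
  proof (rule nn_integral_cong)
    fix x :: real
    have "(\<integral>\<^sup>+z. H x z \<partial>lborel) = ennreal \<bar>- 1 :: real\<bar> * (\<integral>\<^sup>+y. H x ((\<xi> - x) + (- 1) * y) \<partial>lborel)"
      by (rule nn_integral_real_affine) auto
    then show "(\<integral>\<^sup>+z. H x z \<partial>lborel) = (\<integral>\<^sup>+y. ennreal (K (\<xi>, x, \<xi> - x - y)) * ennreal ((G y)\<^sup>2) \<partial>lborel)"
      unfolding H_def using K_nonneg by (simp add: ennreal_mult)
  qed
  also have "\<dots> = (\<integral>\<^sup>+y. \<integral>\<^sup>+x. ennreal (K (\<xi>, x, \<xi> - x - y)) * ennreal ((G y)\<^sup>2) \<partial>lborel \<partial>lborel)"
    by (rule lborel_pair.Fubini'[symmetric]) measurable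
  also have "\<dots> = (\<integral>\<^sup>+y. (\<integral>\<^sup>+x. ennreal (K (\<xi>, x, \<xi> - x - y)) \<partial>lborel) * ennreal ((G y)\<^sup>2) \<partial>lborel)"
    by (intro nn_integral_cong nn_integral_multc) measurable
  also have "\<dots> \<le> (\<integral>\<^sup>+y. B * ennreal ((G y)\<^sup>2) \<partial>lborel)"
    by (intro nn_integral_mono mult_right_mono bound) simp
  also have "\<dots> = B * (\<integral>\<^sup>+y. ennreal ((G y)\<^sup>2) \<partial>lborel)"
    by (rule nn_integral_cmult) measurable
  finally show ?thesis .
qed

lemma nn_integral_kernel_outer_le:
  fixes K :: "real \<times> real \<times> real \<Rightarrow> real" and G1 G3 :: "real \<Rightarrow> real"
  assumes [measurable]: "K \<in> borel_measurable (lborel \<Otimes>\<^sub>M lborel \<Otimes>\<^sub>M lborel)" "G1 \<in> borel_measurable borel" "G3 \<in> borel_measurable borel"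
    and K_nonneg: "\<And>q. 0 \<le> K q"
    and bound: "\<And>p. (\<integral>\<^sup>+\<xi>. ennreal (K (\<xi>, p)) \<partial>lborel) \<le> A"
  shows "(\<integral>\<^sup>+\<xi>. (\<integral>\<^sup>+p. ennreal (K (\<xi>, p) * (G1 (fst p))\<^sup>2 * (G3 (snd p))\<^sup>2) \<partial>(lborel \<Otimes>\<^sub>M lborel)) \<partial>lborel)
     \<le> A * ((\<integral>\<^sup>+x. ennreal ((G1 x)\<^sup>2) \<partial>lborel) * (\<integral>\<^sup>+z. ennreal ((G3 z)\<^sup>2) \<partial>lborel))"
proof -
  define H where "H \<xi> p = ennreal (K (\<xi>, p)) * ennreal ((G1 (fst p))\<^sup>2 * (G3 (snd p))\<^sup>2)"
    for \<xi> :: real and p :: "real \<times> real"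
  have [measurable]: "case_prod H \<in> borel_measurable (lborel \<Otimes>\<^sub>M (lborel \<Otimes>\<^sub>M lborel))"
    unfolding H_def[abs_def] by measurable
  have "(\<integral>\<^sup>+\<xi>. (\<integral>\<^sup>+p. ennreal (K (\<xi>, p) * (G1 (fst p))\<^sup>2 * (G3 (snd p))\<^sup>2) \<partial>(lborel \<Otimes>\<^sub>M lborel)) \<partial>lborel)
      = (\<integral>\<^sup>+\<xi>. (\<integral>\<^sup>+p. H \<xi> p \<partial>(lborel \<Otimes>\<^sub>M lborel)) \<partial>lborel)"
    unfolding H_def using K_nonneg by (simp add: ennreal_mult mult.assoc)
  also have "\<dots> = (\<integral>\<^sup>+p. (\<integral>\<^sup>+\<xi>. H \<xi> p \<partial>lborel) \<partial>(lborel \<Otimes>\<^sub>M lborel))"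
    by (rule pair_sigma_finite.Fubini'[symmetric])
      (auto intro!: pair_sigma_finite.intro sigma_finite_pair_measure lborel.sigma_finite_measure_axioms)
  also have "\<dots> = (\<integral>\<^sup>+p. (\<integral>\<^sup>+\<xi>. ennreal (K (\<xi>, p)) \<partial>lborel) *
      ennreal ((G1 (fst p))\<^sup>2 * (G3 (snd p))\<^sup>2) \<partial>(lborel \<Otimes>\<^sub>M lborel))"
    unfolding H_def by (intro nn_integral_cong nn_integral_multc) measurable
  also have "\<dots> \<le> (\<integral>\<^sup>+p. A * ennreal ((G1 (fst p))\<^sup>2 * (G3 (snd p))\<^sup>2) \<partial>(lborel \<Otimes>\<^sub>M lborel))"
    by (intro nn_integral_mono mult_right_mono bound) simp
  also have "\<dots> = A * (\<integral>\<^sup>+p. ennreal ((G1 (fst p))\<^sup>2) * ennreal ((G3 (snd p))\<^sup>2) \<partial>(lborel \<Otimes>\<^sub>M lborel))"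
    by (subst nn_integral_cmult[symmetric]) (auto simp: ennreal_mult)
  also have "(\<integral>\<^sup>+p. ennreal ((G1 (fst p))\<^sup>2) * ennreal ((G3 (snd p))\<^sup>2) \<partial>(lborel \<Otimes>\<^sub>M lborel))
      = (\<integral>\<^sup>+x. \<integral>\<^sup>+z. ennreal ((G1 x)\<^sup>2) * ennreal ((G3 z)\<^sup>2) \<partial>lborel \<partial>lborel)"
    by (rule lborel.nn_integral_fst[symmetric, where f="\<lambda>p. ennreal ((G1 (fst p))\<^sup>2) * ennreal ((G3 (snd p))\<^sup>2)",
        simplified]) measurable
  also have "\<dots> = (\<integral>\<^sup>+x. ennreal ((G1 x)\<^sup>2) \<partial>lborel) * (\<integral>\<^sup>+z. ennreal ((G3 z)\<^sup>2) \<partial>lborel)"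
    by (simp add: nn_integral_cmult nn_integral_multc)
  finally show ?thesis .
qed

text \<open>Cauchy-Schwarz in \<open>(x, z)\<close> splits the kernel between \<open>G\<^sub>1 G\<^sub>3\<close> and \<open>G\<^sub>2\<close>; each half is
  then controlled by one of the two marginal bounds on \<open>K\<close>.\<close>
lemma trilinear_Schur_bound:
  fixes K :: "real \<times> real \<times> real \<Rightarrow> real" and G1 G2 G3 :: "real \<Rightarrow> real"
  assumes [measurable]: "K \<in> borel_measurable (lborel \<Otimes>\<^sub>M lborel \<Otimes>\<^sub>M lborel)"
      "G1 \<in> borel_measurable borel" "G2 \<in> borel_measurable borel" "G3 \<in> borel_measurable borel"
    and nonneg: "\<And>q. 0 \<le> K q" "\<And>t. 0 \<le> G1 t" "\<And>t. 0 \<le> G2 t" "\<And>t. 0 \<le> G3 t"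
    and bound_out: "\<And>p. (\<integral>\<^sup>+\<xi>. ennreal (K (\<xi>, p)) \<partial>lborel) \<le> A"
    and bound_in: "\<And>\<xi> y. (\<integral>\<^sup>+x. ennreal (K (\<xi>, x, \<xi> - x - y)) \<partial>lborel) \<le> B"
  shows "(\<integral>\<^sup>+\<xi>. (\<integral>\<^sup>+p. ennreal (K (\<xi>, p) * G1 (fst p) * G2 (\<xi> - fst p - snd p) * G3 (snd p))
      \<partial>(lborel \<Otimes>\<^sub>M lborel))\<^sup>2 \<partial>lborel)
    \<le> A * B * ((\<integral>\<^sup>+x. ennreal ((G1 x)\<^sup>2) \<partial>lborel) * (\<integral>\<^sup>+x. ennreal ((G2 x)\<^sup>2) \<partial>lborel) *
      (\<integral>\<^sup>+x. ennreal ((G3 x)\<^sup>2) \<partial>lborel))"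
proof -
  define N where "N G = (\<integral>\<^sup>+x. ennreal ((G x)\<^sup>2) \<partial>lborel)" for G :: "real \<Rightarrow> real"
  define U where "U \<xi> = (\<integral>\<^sup>+p. ennreal (K (\<xi>, p) * (G1 (fst p))\<^sup>2 * (G3 (snd p))\<^sup>2)
      \<partial>(lborel \<Otimes>\<^sub>M lborel))" for \<xi>
  have "sigma_finite_measure (lborel \<Otimes>\<^sub>M lborel :: (real \<times> real) measure)"
    by (intro sigma_finite_pair_measure lborel.sigma_finite_measure_axioms)
  then have [measurable]: "U \<in> borel_measurable lborel"
    unfolding U_def[abs_def] by (rule sigma_finite_measure.borel_measurable_nn_integral) measurable
  have pointwise: "(\<integral>\<^sup>+p. ennreal (K (\<xi>, p) * G1 (fst p) * G2 (\<xi> - fst p - snd p) * G3 (snd p))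
      \<partial>(lborel \<Otimes>\<^sub>M lborel))\<^sup>2 \<le> U \<xi> * (B * N G2)" for \<xi>
  proof -
    have "(\<integral>\<^sup>+p. ennreal (K (\<xi>, p) * G1 (fst p) * G2 (\<xi> - fst p - snd p) * G3 (snd p))
        \<partial>(lborel \<Otimes>\<^sub>M lborel))\<^sup>2
      \<le> U \<xi> * (\<integral>\<^sup>+p. ennreal (K (\<xi>, p) * (G2 (\<xi> - fst p - snd p))\<^sup>2) \<partial>(lborel \<Otimes>\<^sub>M lborel))"
      using Cauchy_Schwarz_weighted_nn_integral[of "\<lambda>p. K (\<xi>, p)" "lborel \<Otimes>\<^sub>M lborel"
          "\<lambda>p. G1 (fst p) * G3 (snd p)" "\<lambda>p. G2 (\<xi> - fst p - snd p)"] nonneg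
      unfolding U_def by (simp add: power_mult_distrib mult_ac)
    also have "\<dots> \<le> U \<xi> * (B * N G2)"
      unfolding N_def using nonneg bound_in by (intro mult_left_mono nn_integral_kernel_middle_le) auto
    finally show ?thesis .
  qed
  have "(\<integral>\<^sup>+\<xi>. (\<integral>\<^sup>+p. ennreal (K (\<xi>, p) * G1 (fst p) * G2 (\<xi> - fst p - snd p) * G3 (snd p))
      \<partial>(lborel \<Otimes>\<^sub>M lborel))\<^sup>2 \<partial>lborel) \<le> (\<integral>\<^sup>+\<xi>. U \<xi> * (B * N G2) \<partial>lborel)"
    using pointwise by (rule nn_integral_mono)
  also have "\<dots> = (\<integral>\<^sup>+\<xi>. U \<xi> \<partial>lborel) * (B * N G2)"
    by (rule nn_integral_multc) measurable
  also have "\<dots> \<le> (A * (N G1 * N G3)) * (B * N G2)"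
    unfolding U_def N_def using nonneg bound_out
    by (intro mult_right_mono nn_integral_kernel_outer_le) auto
  finally show ?thesis
    unfolding N_def by (simp add: mult_ac)
qed

lemma norm_T_integrand_weighted:
  "jbr \<xi> powr (s + \<epsilon>) * norm (T_integrand \<sigma> f1 f2 f3 \<xi> (x, z)) =
   smoothing_kernel \<sigma> s \<epsilon> (\<xi>, x, z) * (jbr x powr s * cmod (f1 x)) *
     (jbr (\<xi> - x - z) powr s * cmod (f2 (\<xi> - x - z))) * (jbr z powr s * cmod (f3 z))"
proof -
  have cancel: "jbr t powr (- s) * jbr t powr s = 1" for t
    using jbr_pos[of t] by (simp add: powr_minus)
  show ?thesis
    unfolding T_integrand_def smoothing_kernel_def
    using cancel[of x] cancel[of "\<xi> - x - z"] cancel[of z]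
    by (simp add: norm_mult mult_ac) (metis (no_types, lifting) mult.assoc mult.left_commute mult_1_right)
qed

lemma T_integrand_measurable:
  assumes [measurable]: "f1 \<in> borel_measurable borel" "f2 \<in> borel_measurable borel" "f3 \<in> borel_measurable borel"
  shows "(\<lambda>p. T_integrand \<sigma> f1 f2 f3 (fst p) (snd p)) \<in> borel_measurable (lborel \<Otimes>\<^sub>M lborel \<Otimes>\<^sub>M lborel)"
  unfolding T_integrand_def Phi_def case_prod_beta by measurable

lemma T_hat_measurable:
  assumes "f1 \<in> borel_measurable borel" "f2 \<in> borel_measurable borel" "f3 \<in> borel_measurable borel"
  shows "T_hat \<sigma> f1 f2 f3 \<in> borel_measurable borel"
proof -
  have "sigma_finite_measure (lborel \<Otimes>\<^sub>M lborel :: (real \<times> real) measure)"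
    by (intro sigma_finite_pair_measure lborel.sigma_finite_measure_axioms)
  then have "(\<lambda>\<xi>. \<integral>p. T_integrand \<sigma> f1 f2 f3 \<xi> p \<partial>(lborel \<Otimes>\<^sub>M lborel)) \<in> borel_measurable lborel"
    by (rule sigma_finite_measure.borel_measurable_lebesgue_integral)
      (use T_integrand_measurable[OF assms] in \<open>simp add: case_prod_beta'\<close>)
  then show ?thesis unfolding T_hat_def[abs_def] lborel_prod by simp
qed

lemma norm_T_hat_le:
  "ennreal (cmod (T_hat \<sigma> f1 f2 f3 \<xi>)) \<le> (\<integral>\<^sup>+p. ennreal (norm (T_integrand \<sigma> f1 f2 f3 \<xi> p)) \<partial>lborel)"
proof (cases "integrable lborel (T_integrand \<sigma> f1 f2 f3 \<xi>)")
  case True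
  then show ?thesis unfolding T_hat_def by (rule integral_norm_bound_ennreal)
next
  case False
  then show ?thesis unfolding T_hat_def by (simp add: not_integrable_integral_eq)
qed

lemma Hs_space_measurable: "Hs_space s f \<Longrightarrow> f \<in> borel_measurable borel"
  unfolding Hs_space_def by simp

lemma Hs_norm_nonneg: "0 \<le> Hs_norm s f"
  unfolding Hs_norm_def by simp

lemma Hs_weight_squared: "(jbr x powr s * cmod (f x))\<^sup>2 = jbr x powr (2 * s) * (cmod (f x))\<^sup>2"
  by (simp add: power_mult_distrib jbr_powr_squared)

lemma nn_integral_Hs_weight:
  assumes "Hs_space s f"
  shows "(\<integral>\<^sup>+x. ennreal ((jbr x powr s * cmod (f x))\<^sup>2) \<partial>lborel) = ennreal ((Hs_norm s f)\<^sup>2)"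
proof -
  have "integrable lborel (\<lambda>\<xi>. jbr \<xi> powr (2 * s) * (cmod (f \<xi>))\<^sup>2)"
    using assms unfolding Hs_space_def by simp
  then have "(\<integral>\<^sup>+x. ennreal ((jbr x powr s * cmod (f x))\<^sup>2) \<partial>lborel)
      = ennreal (\<integral>\<xi>. jbr \<xi> powr (2 * s) * (cmod (f \<xi>))\<^sup>2 \<partial>lborel)"
    unfolding Hs_weight_squared by (rule nn_integral_eq_integral) auto
  moreover have "0 \<le> (\<integral>\<xi>. jbr \<xi> powr (2 * s) * (cmod (f \<xi>))\<^sup>2 \<partial>lborel)"
    by (intro integral_nonneg_AE) auto
  ultimately show ?thesis unfolding Hs_norm_def by simp
qed

lemma Hs_space_if_nn_integral_le:
  assumes [measurable]: "g \<in> borel_measurable borel" and "0 \<le> R"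
    and bound: "(\<integral>\<^sup>+\<xi>. ennreal ((jbr \<xi> powr s * cmod (g \<xi>))\<^sup>2) \<partial>lborel) \<le> ennreal R"
  shows "Hs_space s g" and "Hs_norm s g \<le> sqrt R"
proof -
  define \<psi> where "\<psi> \<xi> = jbr \<xi> powr (2 * s) * (cmod (g \<xi>))\<^sup>2" for \<xi>
  have \<psi>_bound: "(\<integral>\<^sup>+\<xi>. ennreal (\<psi> \<xi>) \<partial>lborel) \<le> ennreal R"
    using bound unfolding \<psi>_def Hs_weight_squared .
  have "integrable lborel \<psi>"
  proof (rule integrableI_bounded)
    show "\<psi> \<in> borel_measurable lborel" unfolding \<psi>_def[abs_def] by measurable
    show "(\<integral>\<^sup>+\<xi>. ennreal (norm (\<psi> \<xi>)) \<partial>lborel) < \<infinity>"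
      using \<psi>_bound by (simp add: \<psi>_def order.strict_trans1)
  qed
  then show "Hs_space s g"
    unfolding Hs_space_def \<psi>_def by simp
  have "(\<integral>\<xi>. \<psi> \<xi> \<partial>lborel) = enn2real (\<integral>\<^sup>+\<xi>. ennreal (\<psi> \<xi>) \<partial>lborel)"
    by (rule integral_eq_nn_integral) (auto simp: \<psi>_def)
  also have "\<dots> \<le> R" by (rule enn2real_leI[OF \<open>0 \<le> R\<close> \<psi>_bound])
  finally show "Hs_norm s g \<le> sqrt R"
    unfolding Hs_norm_def \<psi>_def by simp
qed

lemma nn_integral_T_integrand_weighted:
  assumes "f1 \<in> borel_measurable borel" "f2 \<in> borel_measurable borel" "f3 \<in> borel_measurable borel"
  shows "ennreal (jbr \<xi> powr (s + \<epsilon>)) * (\<integral>\<^sup>+p. ennreal (norm (T_integrand \<sigma> f1 f2 f3 \<xi> p)) \<partial>lborel) =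
   (\<integral>\<^sup>+p. ennreal (smoothing_kernel \<sigma> s \<epsilon> (\<xi>, p) * (jbr (fst p) powr s * cmod (f1 (fst p))) *
      (jbr (\<xi> - fst p - snd p) powr s * cmod (f2 (\<xi> - fst p - snd p))) *
      (jbr (snd p) powr s * cmod (f3 (snd p)))) \<partial>(lborel \<Otimes>\<^sub>M lborel))"
proof -
  have [measurable]: "T_integrand \<sigma> f1 f2 f3 \<xi> \<in> borel_measurable (lborel \<Otimes>\<^sub>M lborel)"
    using measurable_Pair2[OF T_integrand_measurable[OF assms], of \<xi>] by simp
  have "(\<integral>\<^sup>+p. ennreal (norm (T_integrand \<sigma> f1 f2 f3 \<xi> p)) \<partial>lborel)
      = (\<integral>\<^sup>+p. ennreal (norm (T_integrand \<sigma> f1 f2 f3 \<xi> p)) \<partial>(lborel \<Otimes>\<^sub>M lborel))"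
    unfolding lborel_prod ..
  then have "ennreal (jbr \<xi> powr (s + \<epsilon>)) * (\<integral>\<^sup>+p. ennreal (norm (T_integrand \<sigma> f1 f2 f3 \<xi> p)) \<partial>lborel)
      = (\<integral>\<^sup>+p. ennreal (jbr \<xi> powr (s + \<epsilon>)) * ennreal (norm (T_integrand \<sigma> f1 f2 f3 \<xi> p)) \<partial>(lborel \<Otimes>\<^sub>M lborel))"
    by (simp add: nn_integral_cmult)
  also have "\<dots> = (\<integral>\<^sup>+p. ennreal (smoothing_kernel \<sigma> s \<epsilon> (\<xi>, p) * (jbr (fst p) powr s * cmod (f1 (fst p))) *
      (jbr (\<xi> - fst p - snd p) powr s * cmod (f2 (\<xi> - fst p - snd p))) *
      (jbr (snd p) powr s * cmod (f3 (snd p)))) \<partial>(lborel \<Otimes>\<^sub>M lborel))"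
  proof (rule nn_integral_cong)
    fix p :: "real \<times> real"
    obtain x z where p: "p = (x, z)" by fastforce
    show "ennreal (jbr \<xi> powr (s + \<epsilon>)) * ennreal (norm (T_integrand \<sigma> f1 f2 f3 \<xi> p)) =
        ennreal (smoothing_kernel \<sigma> s \<epsilon> (\<xi>, p) * (jbr (fst p) powr s * cmod (f1 (fst p))) *
          (jbr (\<xi> - fst p - snd p) powr s * cmod (f2 (\<xi> - fst p - snd p))) *
          (jbr (snd p) powr s * cmod (f3 (snd p))))"
      unfolding p using norm_T_integrand_weighted[of \<xi> s \<epsilon> \<sigma> f1 f2 f3 x z]
      by (simp add: ennreal_mult[symmetric])
  qed
  finally show ?thesis .
qed

lemma nn_integral_norm_T_integrand_measurable:
  assumes "f1 \<in> borel_measurable borel" "f2 \<in> borel_measurable borel" "f3 \<in> borel_measurable borel"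
  shows "(\<lambda>\<xi>. \<integral>\<^sup>+p. ennreal (norm (T_integrand \<sigma> f1 f2 f3 \<xi> p)) \<partial>lborel) \<in> borel_measurable lborel"
proof -
  have "sigma_finite_measure (lborel :: (real \<times> real) measure)"
    unfolding lborel_prod[symmetric]
    by (intro sigma_finite_pair_measure lborel.sigma_finite_measure_axioms)
  then show ?thesis
    using T_integrand_measurable[OF assms]
    by (intro sigma_finite_measure.borel_measurable_nn_integral) (simp_all add: case_prod_beta' lborel_prod)
qed

lemma weighted_norm_T_integrand_L2_bound:
  fixes f1 f2 f3 :: "real \<Rightarrow> complex"
  assumes s\<epsilon>: "0 \<le> s" "0 \<le> \<epsilon>" "\<epsilon> \<le> 2 * s" "\<epsilon> < 1" and \<sigma>: "0 < \<sigma>" "\<sigma> < 1" "1 + \<epsilon> < 2 * \<sigma>"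
    and H: "Hs_space s f1" "Hs_space s f2" "Hs_space s f3"
  defines "C \<equiv> weight_const s \<epsilon> * (2 * resonance_const \<sigma> \<epsilon>)"
  shows "(\<integral>\<^sup>+\<xi>. (ennreal (jbr \<xi> powr (s + \<epsilon>)) *
      (\<integral>\<^sup>+p. ennreal (norm (T_integrand \<sigma> f1 f2 f3 \<xi> p)) \<partial>lborel))\<^sup>2 \<partial>lborel)
    \<le> ennreal ((C * Hs_norm s f1 * Hs_norm s f2 * Hs_norm s f3)\<^sup>2)"
proof -
  note f_meas [measurable] = Hs_space_measurable[OF H(1)] Hs_space_measurable[OF H(2)] Hs_space_measurable[OF H(3)]
  define G where "G f t = jbr t powr s * cmod (f t)" for f :: "real \<Rightarrow> complex" and t
  have "0 \<le> C" unfolding C_def using weight_const_nonneg resonance_const_nonneg \<sigma> by simp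
  have "(\<integral>\<^sup>+\<xi>. (ennreal (jbr \<xi> powr (s + \<epsilon>)) *
      (\<integral>\<^sup>+p. ennreal (norm (T_integrand \<sigma> f1 f2 f3 \<xi> p)) \<partial>lborel))\<^sup>2 \<partial>lborel)
    = (\<integral>\<^sup>+\<xi>. (\<integral>\<^sup>+p. ennreal (smoothing_kernel \<sigma> s \<epsilon> (\<xi>, p) *
      G f1 (fst p) * G f2 (\<xi> - fst p - snd p) * G f3 (snd p)) \<partial>(lborel \<Otimes>\<^sub>M lborel))\<^sup>2 \<partial>lborel)"
    unfolding G_def nn_integral_T_integrand_weighted[OF f_meas] ..
  also have "\<dots> \<le> ennreal C * ennreal C *
      (ennreal ((Hs_norm s f1)\<^sup>2) * ennreal ((Hs_norm s f2)\<^sup>2) * ennreal ((Hs_norm s f3)\<^sup>2))"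
    unfolding G_def nn_integral_Hs_weight[OF H(1), symmetric]
      nn_integral_Hs_weight[OF H(2), symmetric] nn_integral_Hs_weight[OF H(3), symmetric]
    by (rule trilinear_Schur_bound)
      (use smoothing_kernel_nonneg smoothing_kernel_integral_out_le[OF s\<epsilon> \<sigma>]
        smoothing_kernel_integral_in_le[OF s\<epsilon> \<sigma>] in \<open>auto simp: C_def\<close>)
  also have "\<dots> = ennreal ((C * Hs_norm s f1 * Hs_norm s f2 * Hs_norm s f3)\<^sup>2)"
    using \<open>0 \<le> C\<close>
    by (simp add: ennreal_mult[symmetric] mult_nonneg_nonneg Hs_norm_nonneg power2_eq_square mult_ac)
  finally show ?thesis .
qed

lemma T_hat_smoothing_estimate:
  fixes f1 f2 f3 :: "real \<Rightarrow> complex"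
  assumes s\<epsilon>: "0 \<le> s" "0 \<le> \<epsilon>" "\<epsilon> \<le> 2 * s" "\<epsilon> < 1" and \<sigma>: "0 < \<sigma>" "\<sigma> < 1" "1 + \<epsilon> < 2 * \<sigma>"
    and H: "Hs_space s f1" "Hs_space s f2" "Hs_space s f3"
  defines "C \<equiv> weight_const s \<epsilon> * (2 * resonance_const \<sigma> \<epsilon>)"
  shows "AE \<xi> in lborel. integrable lborel (T_integrand \<sigma> f1 f2 f3 \<xi>)"
    and "Hs_space (s + \<epsilon>) (T_hat \<sigma> f1 f2 f3)"
    and "Hs_norm (s + \<epsilon>) (T_hat \<sigma> f1 f2 f3) \<le> C * Hs_norm s f1 * Hs_norm s f2 * Hs_norm s f3"
proof -
  note f_meas = Hs_space_measurable[OF H(1)] Hs_space_measurable[OF H(2)] Hs_space_measurable[OF H(3)]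
  define Tn where "Tn \<xi> = (\<integral>\<^sup>+p. ennreal (norm (T_integrand \<sigma> f1 f2 f3 \<xi> p)) \<partial>lborel)" for \<xi>
  define n where "n = C * Hs_norm s f1 * Hs_norm s f2 * Hs_norm s f3"
  have "0 \<le> n"
    unfolding n_def C_def using weight_const_nonneg resonance_const_nonneg \<sigma> by (simp add: Hs_norm_nonneg)
  have L2_bound: "(\<integral>\<^sup>+\<xi>. (ennreal (jbr \<xi> powr (s + \<epsilon>)) * Tn \<xi>)\<^sup>2 \<partial>lborel) \<le> ennreal (n\<^sup>2)"
    unfolding Tn_def n_def C_def by (rule weighted_norm_T_integrand_L2_bound[OF s\<epsilon> \<sigma> H])
  have [measurable]: "Tn \<in> borel_measurable lborel"
    unfolding Tn_def[abs_def] by (rule nn_integral_norm_T_integrand_measurable[OF f_meas])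
  have "AE \<xi> in lborel. (ennreal (jbr \<xi> powr (s + \<epsilon>)) * Tn \<xi>)\<^sup>2 \<noteq> \<infinity>"
    using L2_bound by (intro nn_integral_PInf_AE) (auto simp: top_unique)
  then show "AE \<xi> in lborel. integrable lborel (T_integrand \<sigma> f1 f2 f3 \<xi>)"
  proof eventually_elim
    case (elim \<xi>)
    then have "Tn \<xi> < \<infinity>"
      using jbr_pos[of \<xi>] by (auto simp: ennreal_mult_eq_top_iff power2_eq_square top.not_eq_extremum)
    moreover have "T_integrand \<sigma> f1 f2 f3 \<xi> \<in> borel_measurable lborel"
      using measurable_Pair2[OF T_integrand_measurable[OF f_meas], of \<xi>] by (simp add: lborel_prod)
    ultimately show ?case unfolding Tn_def by (simp add: integrable_iff_bounded)
  qed
  have "(\<integral>\<^sup>+\<xi>. ennreal ((jbr \<xi> powr (s + \<epsilon>) * cmod (T_hat \<sigma> f1 f2 f3 \<xi>))\<^sup>2) \<partial>lborel) \<le> ennreal (n\<^sup>2)"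
  proof (rule order_trans[OF nn_integral_mono L2_bound])
    fix \<xi>
    have "ennreal ((jbr \<xi> powr (s + \<epsilon>) * cmod (T_hat \<sigma> f1 f2 f3 \<xi>))\<^sup>2)
        = (ennreal (jbr \<xi> powr (s + \<epsilon>)) * ennreal (cmod (T_hat \<sigma> f1 f2 f3 \<xi>)))\<^sup>2"
      by (simp add: ennreal_mult[symmetric] ennreal_power[symmetric])
    also have "\<dots> \<le> (ennreal (jbr \<xi> powr (s + \<epsilon>)) * Tn \<xi>)\<^sup>2"
      unfolding Tn_def by (intro power_mono mult_left_mono norm_T_hat_le) auto
    finally show "ennreal ((jbr \<xi> powr (s + \<epsilon>) * cmod (T_hat \<sigma> f1 f2 f3 \<xi>))\<^sup>2)
        \<le> (ennreal (jbr \<xi> powr (s + \<epsilon>)) * Tn \<xi>)\<^sup>2" .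
  qed
  from Hs_space_if_nn_integral_le[OF T_hat_measurable[OF f_meas] _ this]
  show "Hs_space (s + \<epsilon>) (T_hat \<sigma> f1 f2 f3)"
    and "Hs_norm (s + \<epsilon>) (T_hat \<sigma> f1 f2 f3) \<le> C * Hs_norm s f1 * Hs_norm s f2 * Hs_norm s f3"
    using \<open>0 \<le> n\<close> by (simp_all add: n_def)
qed

theorem lemma7:
  fixes s \<epsilon> :: real
  assumes "s > 0" and "0 < \<epsilon>" and "\<epsilon> < min (2 * s) 1"
  shows "\<exists>\<sigma>::real. 0 < \<sigma> \<and> \<sigma> < 1 \<and> (\<exists>C::real. C > 0 \<and>
           (\<forall>f1 f2 f3. Hs_space s f1 \<and> Hs_space s f2 \<and> Hs_space s f3 \<longrightarrow>
              (AE \<xi> in lborel. integrable lborel (T_integrand \<sigma> f1 f2 f3 \<xi>)) \<and>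
              Hs_space (s + \<epsilon>) (T_hat \<sigma> f1 f2 f3) \<and>
              Hs_norm (s + \<epsilon>) (T_hat \<sigma> f1 f2 f3)
                \<le> C * Hs_norm s f1 * Hs_norm s f2 * Hs_norm s f3))"
proof -
  define \<sigma> where "\<sigma> = (3 + \<epsilon>) / 4"
  have s\<epsilon>: "0 \<le> s" "0 \<le> \<epsilon>" "\<epsilon> \<le> 2 * s" "\<epsilon> < 1" using assms by auto
  have \<sigma>: "0 < \<sigma>" "\<sigma> < 1" "1 + \<epsilon> < 2 * \<sigma>" unfolding \<sigma>_def using s\<epsilon> by auto
  define C where "C = weight_const s \<epsilon> * (2 * resonance_const \<sigma> \<epsilon>)"
  have "0 < C"
    unfolding C_def weight_const_def resonance_const_def using \<sigma> by (simp add: add_pos_nonneg)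
  moreover note T_hat_smoothing_estimate[OF s\<epsilon> \<sigma>, folded C_def]
  ultimately show ?thesis using \<sigma> by blast
qed

end
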